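(* Let $\mathrm{M}$ be a (loopless) matroid of rank $d+1$. For nested index sets $J\subseteq J'\subseteq[d]$, \[ \frac{N_J(\mathrm{M})}{U_J}\le\frac{N_{J'}(\mathrm{M})}{U_{J'}}. \]
   Context: For $J=\{j_1<\cdots<j_m\}\subseteq[d]$, $N_J(\mathrm{M})$ is the number of chains of flats $G_1\subsetneq\cdots\subsetneq G_m$ of $\mathrm{M}$ with $\operatorname{rk}(G_\ell)=j_\ell$ (with $N_\varnothing=1$). $U_J:=N_J(\mathrm{U}_{d+1})$ for the Boolean matroid $\mathrm{U}_{d+1}$ on $d+1$ elements; explicitly $U_J=\frac{n_{m+1}(d+1)!}{\prod_{i=1}^{m+1}n_i!}$, where $n_1=j_1$, $n_\ell=j_\ell-j_{\ell-1}$ ($2\le\ell\le m$), $n_{m+1}=d+2-j_m$ (and $n_1=d+2$ if $J=\varnothing$). *)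

theory Defs
  imports Complex_Main
begin

definition matroid :: "'a set \<Rightarrow> ('a set \<Rightarrow> bool) \<Rightarrow> bool" where
  "matroid E indep \<longleftrightarrow> finite E
     \<and> (\<forall>I. indep I \<longrightarrow> I \<subseteq> E)
     \<and> indep {}
     \<and> (\<forall>I J. indep J \<and> I \<subseteq> J \<longrightarrow> indep I)
     \<and> (\<forall>I J. indep I \<and> indep J \<and> card I < card J \<longrightarrow> (\<exists>x\<in>J - I. indep (insert x I)))"

definition loopless :: "'a set \<Rightarrow> ('a set \<Rightarrow> bool) \<Rightarrow> bool" where
  "loopless E indep \<longleftrightarrow> (\<forall>x\<in>E. indep {x})"

definition mrank :: "('a set \<Rightarrow> bool) \<Rightarrow> 'a set \<Rightarrow> nat" where
  "mrank indep X = Max {card I | I. I \<subseteq> X \<and> indep I}"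

definition flat :: "'a set \<Rightarrow> ('a set \<Rightarrow> bool) \<Rightarrow> 'a set \<Rightarrow> bool" where
  "flat E indep F \<longleftrightarrow> F \<subseteq> E \<and> (\<forall>x\<in>E - F. mrank indep (insert x F) > mrank indep F)"

text \<open>N_J(M): number of chains of flats G_{j_1} \<subset> ... \<subset> G_{j_m} with rk(G_j) = j,
  encoded as functions on J (extended by {} outside J).\<close>
definition chains_of_flats :: "'a set \<Rightarrow> ('a set \<Rightarrow> bool) \<Rightarrow> nat set \<Rightarrow> (nat \<Rightarrow> 'a set) set" where
  "chains_of_flats E indep J =
     {G. (\<forall>j\<in>J. flat E indep (G j) \<and> mrank indep (G j) = j)
       \<and> (\<forall>j\<in>J. \<forall>j'\<in>J. j < j' \<longrightarrow> G j \<subset> G j')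
       \<and> (\<forall>j. j \<notin> J \<longrightarrow> G j = {})}"

definition N_flag :: "'a set \<Rightarrow> ('a set \<Rightarrow> bool) \<Rightarrow> nat set \<Rightarrow> nat" where
  "N_flag E indep J = card (chains_of_flats E indep J)"

definition U_flag :: "nat \<Rightarrow> nat set \<Rightarrow> nat" where
  "U_flag d J = N_flag {0..d} (\<lambda>I. I \<subseteq> {0..d}) J"

end

theory Submission
  imports Defs
begin

text \<open>Let \<open>a \<le> k \<le> b\<close> be the neighbours of a new index \<open>k \<notin> J\<close> in \<open>J \<union> {0, n}\<close>, where \<open>n\<close> is
  the rank of the matroid. A chain of flats indexed by \<open>J\<close> extends to \<open>J \<union> {k}\<close> by any flat of
  rank \<open>k\<close> lying between its members of ranks \<open>a\<close> and \<open>b\<close> (the empty set and the ground set at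
  the ends). There are at least \<open>(b - a) choose (k - a)\<close> such flats: extend a basis \<open>I\<close> of the
  lower flat to a basis \<open>T\<close> of the upper one; the spans of \<open>I \<union> S\<close> for the \<open>(k - a)\<close>-subsets
  \<open>S\<close> of \<open>T - I\<close> are distinct, since \<open>S\<close> is recovered as the span met with \<open>T - I\<close>. In the
  Boolean matroid the flats in question are just the \<open>k\<close>-sets between two sets of sizes \<open>a\<close>
  and \<open>b\<close>, so there are at most that many. Hence adding \<open>k\<close> multiplies \<open>N\<close> by at least and
  \<open>U\<close> by at most the same factor, and \<open>N\<^sub>J / U\<^sub>J\<close> increases as the elements of
  \<open>J' - J\<close> are added one at a time.\<close>

definition lower_neighbour :: "nat set \<Rightarrow> nat \<Rightarrow> nat" where
  "lower_neighbour J k = Max (insert 0 {j\<in>J. j < k})"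

definition upper_neighbour :: "nat \<Rightarrow> nat set \<Rightarrow> nat \<Rightarrow> nat" where
  "upper_neighbour n J k = Min (insert n {j\<in>J. k < j})"

definition insertion_factor :: "nat \<Rightarrow> nat set \<Rightarrow> nat \<Rightarrow> nat" where
  "insertion_factor n J k =
     (upper_neighbour n J k - lower_neighbour J k) choose (k - lower_neighbour J k)"

lemma lower_neighbour_le: "lower_neighbour J k \<le> k"
proof -
  have "finite (insert 0 {j\<in>J. j < k})"
    by (rule finite_subset[of _ "{..k}"]) auto
  then show ?thesis
    unfolding lower_neighbour_def by (subst Max_le_iff) auto
qed

lemma le_upper_neighbour: "finite J \<Longrightarrow> k \<le> n \<Longrightarrow> k \<le> upper_neighbour n J k"
  unfolding upper_neighbour_def by (subst Min_ge_iff) auto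

lemma card_sets_between_le_binomial:
  assumes "A \<subseteq> B" "finite B"
  shows "card {F. A \<subseteq> F \<and> F \<subseteq> B \<and> card F = k} \<le> (card B - card A) choose (k - card A)"
proof -
  let ?Fs = "{F. A \<subseteq> F \<and> F \<subseteq> B \<and> card F = k}"
  let ?Ss = "{S. S \<subseteq> B - A \<and> card S = k - card A}"
  have fin_A: "finite A"
    using assms finite_subset by blast
  have "inj_on (\<lambda>F. F - A) ?Fs"
    by (rule inj_onI) blast
  moreover have "(\<lambda>F. F - A) ` ?Fs \<subseteq> ?Ss"
    using card_Diff_subset[OF fin_A] by auto
  moreover have "finite ?Ss"
    using assms(2) by simp
  ultimately have "card ?Fs \<le> card ?Ss"
    by (rule card_inj_on_le)
  also have "\<dots> = (card B - card A) choose (k - card A)"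
    using n_subsets[of "B - A"] assms card_Diff_subset[OF fin_A] by simp
  finally show ?thesis .
qed

lemma matroid_subsets: "finite S \<Longrightarrow> matroid S (\<lambda>I. I \<subseteq> S)"
  unfolding matroid_def
proof (intro conjI allI impI)
  fix I J
  assume "finite S" and IJ: "I \<subseteq> S \<and> J \<subseteq> S \<and> card I < card J"
  then have "\<not> J \<subseteq> I"
    using card_mono[of I J] finite_subset[of I S] by auto
  then show "\<exists>x\<in>J - I. insert x I \<subseteq> S"
    using IJ by blast
qed auto

locale finite_matroid =
  fixes E :: "'a set" and indep :: "'a set \<Rightarrow> bool"
  assumes matroid: "matroid E indep"
begin

lemma finite_ground: "finite E"
  using matroid by (simp add: matroid_def)

lemma indep_subset_ground: "indep I \<Longrightarrow> I \<subseteq> E"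
  using matroid by (simp add: matroid_def)

lemma indep_empty: "indep {}"
  using matroid by (simp add: matroid_def)

lemma indep_subset: "indep J \<Longrightarrow> I \<subseteq> J \<Longrightarrow> indep I"
  using matroid unfolding matroid_def by blast

lemma indep_augment:
  "indep I \<Longrightarrow> indep J \<Longrightarrow> card I < card J \<Longrightarrow> \<exists>x\<in>J - I. indep (insert x I)"
  using matroid unfolding matroid_def by blast

lemma indep_finite: "indep I \<Longrightarrow> finite I"
  using indep_subset_ground finite_ground finite_subset by blast

lemma finite_indep_cards: "finite {card I | I. I \<subseteq> X \<and> indep I}"
proof -
  have "{card I | I. I \<subseteq> X \<and> indep I} \<subseteq> {..card E}"
    using indep_subset_ground card_mono[OF finite_ground] by fastforce
  then show ?thesis
    using finite_subset by blast
qed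

lemma card_le_mrank: "I \<subseteq> X \<Longrightarrow> indep I \<Longrightarrow> card I \<le> mrank indep X"
  unfolding mrank_def using finite_indep_cards by (auto intro: Max_ge)

lemma obtain_basis:
  obtains I where "I \<subseteq> X" "indep I" "card I = mrank indep X"
proof -
  have "{card I | I. I \<subseteq> X \<and> indep I} \<noteq> {}"
    using indep_empty by auto
  then have "mrank indep X \<in> {card I | I. I \<subseteq> X \<and> indep I}"
    unfolding mrank_def using Max_in[OF finite_indep_cards] by blast
  then show ?thesis
    using that by auto
qed

lemma mrank_empty: "mrank indep {} = 0"
proof -
  obtain I where "I \<subseteq> {}" "indep I" "card I = mrank indep {}"
    using obtain_basis .
  then show ?thesis
    by simp
qed

lemma mrank_mono:
  assumes "X \<subseteq> Y"
  shows "mrank indep X \<le> mrank indep Y"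
proof -
  obtain I where "I \<subseteq> X" "indep I" "card I = mrank indep X"
    using obtain_basis .
  then show ?thesis
    using card_le_mrank[of I Y] assms by simp
qed

lemma indep_extend_to_basis:
  assumes "indep T" "T \<subseteq> X"
  obtains B where "T \<subseteq> B" "B \<subseteq> X" "indep B" "card B = mrank indep X"
  using assms
proof (induction "mrank indep X - card T" arbitrary: T rule: less_induct)
  case less
  have le: "card T \<le> mrank indep X"
    using card_le_mrank[OF less.prems(3,2)] .
  show ?case
  proof (cases "card T = mrank indep X")
    case True
    then show ?thesis
      using less.prems by blast
  next
    case False
    obtain I where I: "I \<subseteq> X" "indep I" "card I = mrank indep X"
      using obtain_basis .
    then obtain y where y: "y \<in> I - T" "indep (insert y T)"
      using indep_augment[OF less.prems(2) I(2)] le False by force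
    have "card (insert y T) = card T + 1"
      using y indep_finite[OF less.prems(2)] by simp
    then show ?thesis
      using less.hyps[of "insert y T"] less.prems le False y I(1) by force
  qed
qed

lemma flat_subset_ground: "flat E indep F \<Longrightarrow> F \<subseteq> E"
  by (simp add: flat_def)

lemma flat_ground: "flat E indep E"
  by (simp add: flat_def)

text \<open>For independent \<open>T\<close> this is the closure of \<open>T\<close>.\<close>
definition span :: "'a set \<Rightarrow> 'a set" where
  "span T = {x\<in>E. x \<in> T \<or> \<not> indep (insert x T)}"

lemma span_subset_ground: "span T \<subseteq> E"
  unfolding span_def by blast

lemma subset_span: "indep T \<Longrightarrow> T \<subseteq> span T"
  using indep_subset_ground unfolding span_def by blast

lemma mrank_span:
  assumes "indep T"
  shows "mrank indep (span T) = card T"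
proof (rule antisym)
  show "card T \<le> mrank indep (span T)"
    using card_le_mrank[OF subset_span[OF assms] assms] .
  show "mrank indep (span T) \<le> card T"
  proof (rule ccontr)
    assume "\<not> mrank indep (span T) \<le> card T"
    moreover obtain I where "I \<subseteq> span T" "indep I" "card I = mrank indep (span T)"
      using obtain_basis .
    ultimately show False
      using indep_augment[OF assms, of I] unfolding span_def by force
  qed
qed

lemma flat_span:
  assumes "indep T"
  shows "flat E indep (span T)"
  unfolding flat_def
proof (intro conjI ballI)
  show "span T \<subseteq> E"
    by (rule span_subset_ground)
  fix x
  assume "x \<in> E - span T"
  then have "x \<notin> T" "indep (insert x T)"
    unfolding span_def by auto
  moreover have "insert x T \<subseteq> insert x (span T)"
    using subset_span[OF assms] by blast
  ultimately have "card (insert x T) \<le> mrank indep (insert x (span T))"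
    using card_le_mrank by blast
  then have "card T + 1 \<le> mrank indep (insert x (span T))"
    using \<open>x \<notin> T\<close> indep_finite[OF assms] by simp
  then show "mrank indep (span T) < mrank indep (insert x (span T))"
    using mrank_span[OF assms] by simp
qed

lemma span_subset_flat:
  assumes F: "flat E indep F" and T: "indep T" "T \<subseteq> F"
  shows "span T \<subseteq> F"
proof
  fix x
  assume "x \<in> span T"
  then have x: "x \<in> E" "x \<in> T \<or> \<not> indep (insert x T)"
    unfolding span_def by auto
  show "x \<in> F"
  proof (rule ccontr)
    assume "x \<notin> F"
    then have dep: "\<not> indep (insert x T)" and gt: "mrank indep F < mrank indep (insert x F)"
      using x T(2) F unfolding flat_def by auto
    obtain B where B: "T \<subseteq> B" "B \<subseteq> F" "indep B" "card B = mrank indep F"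
      using indep_extend_to_basis[OF T] .
    obtain I where I: "I \<subseteq> insert x F" "indep I" "card I = mrank indep (insert x F)"
      using obtain_basis .
    obtain y where y: "y \<in> I - B" "indep (insert y B)"
      using indep_augment[OF B(3) I(2)] gt B(4) I(3) by auto
    show False
    proof (cases "y = x")
      case True
      then show False
        using dep indep_subset[OF y(2), of "insert x T"] B(1) by blast
    next
      case False
      then have "insert y B \<subseteq> F"
        using y I(1) B(2) by blast
      then have "card (insert y B) \<le> mrank indep F"
        using card_le_mrank y(2) by blast
      then show False
        using y B(4) indep_finite[OF B(3)] by simp
    qed
  qed
qed

lemma span_mono: "T \<subseteq> T' \<Longrightarrow> span T \<subseteq> span T'"
  unfolding span_def using indep_subset[of "insert _ T'" "insert _ T"] by blast

lemma subset_span_basis: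
  assumes "A \<subseteq> E" "I \<subseteq> A" "indep I" "card I = mrank indep A"
  shows "A \<subseteq> span I"
proof
  fix x
  assume x: "x \<in> A"
  have "\<not> indep (insert x I)" if "x \<notin> I"
  proof
    assume "indep (insert x I)"
    then have "card (insert x I) \<le> mrank indep A"
      using card_le_mrank x assms(2) by blast
    then show False
      using that assms(4) indep_finite[OF assms(3)] by simp
  qed
  then show "x \<in> span I"
    using x assms(1) unfolding span_def by blast
qed

lemma span_Int_indep:
  assumes "indep B" "T \<subseteq> B"
  shows "span T \<inter> B = T"
  using assms subset_span[OF indep_subset[OF assms]] indep_subset[OF assms(1), of "insert _ T"]
  unfolding span_def by blast

lemma span_between:
  assumes B: "flat E indep B" and AB: "A \<subseteq> B"
    and I: "I \<subseteq> A" "indep I" "card I = mrank indep A"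
    and S: "indep (I \<union> S)" "I \<union> S \<subseteq> B" "I \<inter> S = {}"
  shows "flat E indep (span (I \<union> S))" "mrank indep (span (I \<union> S)) = mrank indep A + card S"
    "A \<subseteq> span (I \<union> S)" "span (I \<union> S) \<subseteq> B"
proof -
  have "card (I \<union> S) = card I + card S"
    using card_Un_disjoint[of I S] S(3) indep_finite[OF S(1)] by simp
  then show "mrank indep (span (I \<union> S)) = mrank indep A + card S"
    using mrank_span[OF S(1)] I(3) by simp
  show "A \<subseteq> span (I \<union> S)"
    using subset_span_basis[OF _ I] span_mono[of I "I \<union> S"] AB flat_subset_ground[OF B] by blast
qed (use flat_span[OF S(1)] span_subset_flat[OF B S(1,2)] in auto)

lemma binomial_le_card_flats_between:
  assumes AB: "A \<subseteq> B" and B: "flat E indep B"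
    and k: "mrank indep A \<le> k" "k \<le> mrank indep B"
  shows "(mrank indep B - mrank indep A) choose (k - mrank indep A)
    \<le> card {F. flat E indep F \<and> mrank indep F = k \<and> A \<subseteq> F \<and> F \<subseteq> B}"
proof -
  obtain I where I: "I \<subseteq> A" "indep I" "card I = mrank indep A"
    using obtain_basis .
  have "I \<subseteq> B"
    using I(1) AB by blast
  then obtain T where T: "I \<subseteq> T" "T \<subseteq> B" "indep T" "card T = mrank indep B"
    by (rule indep_extend_to_basis[OF I(2)])
  define K where "K = T - I"
  have fin_K: "finite K"
    unfolding K_def using indep_finite[OF T(3)] by simp
  have card_K: "card K = mrank indep B - mrank indep A"
    unfolding K_def using card_Diff_subset[OF indep_finite[OF I(2)] T(1)] I(3) T(4) by simp
  let ?Ss = "{S. S \<subseteq> K \<and> card S = k - mrank indep A}"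
  let ?Fs = "{F. flat E indep F \<and> mrank indep F = k \<and> A \<subseteq> F \<and> F \<subseteq> B}"
  have into: "(\<lambda>S. span (I \<union> S)) ` ?Ss \<subseteq> ?Fs"
  proof (rule image_subsetI)
    fix S
    assume S: "S \<in> ?Ss"
    have "I \<union> S \<subseteq> T" "I \<inter> S = {}"
      using S T(1) unfolding K_def by auto
    then have "indep (I \<union> S)" "I \<union> S \<subseteq> B" "I \<inter> S = {}"
      using indep_subset[OF T(3)] T(2) by auto
    then show "span (I \<union> S) \<in> ?Fs"
      using span_between[OF B AB I] S k(1) by simp
  qed
  have inj: "inj_on (\<lambda>S. span (I \<union> S)) ?Ss"
  proof (rule inj_onI)
    have recover: "span (I \<union> S) \<inter> K = S" if "S \<subseteq> K" for S
      using span_Int_indep[OF T(3), of "I \<union> S"] that T(1) unfolding K_def by blast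
    fix S S'
    assume "S \<in> ?Ss" "S' \<in> ?Ss" and eq: "span (I \<union> S) = span (I \<union> S')"
    then have "S \<subseteq> K" "S' \<subseteq> K"
      by auto
    have "S = span (I \<union> S) \<inter> K"
      using recover[OF \<open>S \<subseteq> K\<close>] by (rule sym)
    also have "\<dots> = S'"
      unfolding eq using recover[OF \<open>S' \<subseteq> K\<close>] .
    finally show "S = S'" .
  qed
  have "finite ?Fs"
    using finite_subset[OF flat_subset_ground[OF B] finite_ground] by simp
  then have "card ?Ss \<le> card ?Fs"
    using card_inj_on_le[OF inj into] by blast
  then show ?thesis
    using n_subsets[OF fin_K] card_K by simp
qed

lemma chain_mono:
  assumes "H \<in> chains_of_flats E indep J" "i \<in> J" "j \<in> J" "i \<le> j"
  shows "H i \<subseteq> H j"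
proof (cases "i = j")
  case False
  then have "i < j"
    using assms(4) by simp
  then show ?thesis
    using assms(1-3) unfolding chains_of_flats_def by blast
qed simp

lemma finite_chains_of_flats:
  assumes "finite J"
  shows "finite (chains_of_flats E indep J)"
proof (rule finite_subset)
  show "chains_of_flats E indep J \<subseteq> {G. \<forall>j. (j \<in> J \<longrightarrow> G j \<in> Pow E) \<and> (j \<notin> J \<longrightarrow> G j = {})}"
    unfolding chains_of_flats_def using flat_subset_ground by blast
  show "finite {G. \<forall>j. (j \<in> J \<longrightarrow> G j \<in> Pow E) \<and> (j \<notin> J \<longrightarrow> G j = {})}"
    using assms finite_ground by (intro finite_set_of_finite_funs) auto
qed

definition insertion_flats :: "nat set \<Rightarrow> nat \<Rightarrow> (nat \<Rightarrow> 'a set) \<Rightarrow> 'a set set" where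
  "insertion_flats J k H = {F. flat E indep F \<and> mrank indep F = k
     \<and> (\<forall>j\<in>J. j < k \<longrightarrow> H j \<subseteq> F) \<and> (\<forall>j\<in>J. k < j \<longrightarrow> F \<subseteq> H j)}"

lemma fun_upd_in_chains_of_flats:
  assumes H: "H \<in> chains_of_flats E indep J" and F: "F \<in> insertion_flats J k H"
  shows "H(k := F) \<in> chains_of_flats E indep (insert k J)"
proof -
  have "F \<subset> H j" if "j \<in> J" "k < j" for j
    using F H that unfolding insertion_flats_def chains_of_flats_def by auto
  moreover have "H j \<subset> F" if "j \<in> J" "j < k" for j
    using F H that unfolding insertion_flats_def chains_of_flats_def by auto
  ultimately show ?thesis
    using F H unfolding insertion_flats_def chains_of_flats_def by simp
qed

lemma fun_upd_empty_in_chains_of_flats: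
  assumes G: "G \<in> chains_of_flats E indep (insert k J)" and "k \<notin> J"
  shows "G(k := {}) \<in> chains_of_flats E indep J"
    and "G k \<in> insertion_flats J k (G(k := {}))"
  using assms unfolding chains_of_flats_def insertion_flats_def by auto

lemma card_chains_of_flats_insert:
  assumes "finite J" "k \<notin> J"
  shows "card (chains_of_flats E indep (insert k J))
    = (\<Sum>H\<in>chains_of_flats E indep J. card (insertion_flats J k H))"
proof -
  let ?C = "chains_of_flats E indep"
  let ?S = "SIGMA H:?C J. insertion_flats J k H"
  have "bij_betw (\<lambda>(H, F). H(k := F)) ?S (?C (insert k J))"
  proof (rule bij_betw_byWitness[where f' = "\<lambda>G. (G(k := {}), G k)"])
    have "H k = {}" if "H \<in> ?C J" for H
      using that assms(2) unfolding chains_of_flats_def by blast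
    then show "\<forall>p\<in>?S. (\<lambda>G. (G(k := {}), G k)) ((\<lambda>(H, F). H(k := F)) p) = p"
      by (auto intro: fun_upd_idem)
    show "\<forall>G\<in>?C (insert k J). (\<lambda>(H, F). H(k := F)) ((\<lambda>G. (G(k := {}), G k)) G) = G"
      by simp
    show "(\<lambda>(H, F). H(k := F)) ` ?S \<subseteq> ?C (insert k J)"
      using fun_upd_in_chains_of_flats by clarsimp
    show "(\<lambda>G. (G(k := {}), G k)) ` ?C (insert k J) \<subseteq> ?S"
      using fun_upd_empty_in_chains_of_flats[OF _ assms(2)] by clarsimp
  qed
  then have "card (?C (insert k J)) = card ?S"
    by (simp add: bij_betw_same_card)
  also have "\<dots> = (\<Sum>H\<in>?C J. card (insertion_flats J k H))"
  proof (rule card_SigmaI[OF finite_chains_of_flats[OF assms(1)]], rule ballI)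
    fix H
    have "insertion_flats J k H \<subseteq> Pow E"
      unfolding insertion_flats_def using flat_subset_ground by blast
    then show "finite (insertion_flats J k H)"
      by (rule finite_subset) (simp add: finite_ground)
  qed
  finally show ?thesis .
qed

lemma Union_chain_of_flats:
  assumes "H \<in> chains_of_flats E indep J" "S \<subseteq> J" "finite S" "S \<noteq> {}"
  shows "\<Union>(H ` S) = H (Max S)"
  using chain_mono[OF assms(1)] assms(2-4) by (auto intro!: Max_ge Max_in)

lemma Inter_chain_of_flats:
  assumes "H \<in> chains_of_flats E indep J" "S \<subseteq> J" "finite S" "S \<noteq> {}"
  shows "\<Inter>(H ` S) = H (Min S)"
  using chain_mono[OF assms(1)] assms(2-4) by (auto intro!: Min_le Min_in)

lemma mrank_Union_chain_below:
  assumes H: "H \<in> chains_of_flats E indep J" and "finite J"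
  shows "mrank indep (\<Union>(H ` {j\<in>J. j < k})) = lower_neighbour J k"
proof (cases "{j\<in>J. j < k} = {}")
  case True
  show ?thesis
    unfolding lower_neighbour_def True by (simp add: mrank_empty)
next
  case False
  let ?S = "{j\<in>J. j < k}"
  have fin: "finite ?S"
    using \<open>finite J\<close> by simp
  have "\<Union>(H ` ?S) = H (Max ?S)"
    using Union_chain_of_flats[OF H _ fin False] by blast
  moreover have "Max ?S \<in> J"
    using Max_in[OF fin False] by blast
  moreover have "lower_neighbour J k = Max ?S"
    unfolding lower_neighbour_def using Max_insert[OF fin False, of 0] by simp
  ultimately show ?thesis
    using H unfolding chains_of_flats_def by simp
qed

lemma Inter_chain_above:
  assumes H: "H \<in> chains_of_flats E indep J" and "finite J"
  shows "flat E indep (E \<inter> \<Inter>(H ` {j\<in>J. k < j}))"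
    and "mrank indep (E \<inter> \<Inter>(H ` {j\<in>J. k < j})) = upper_neighbour (mrank indep E) J k"
proof -
  let ?S = "{j\<in>J. k < j}"
  have "flat E indep (E \<inter> \<Inter>(H ` ?S))
    \<and> mrank indep (E \<inter> \<Inter>(H ` ?S)) = upper_neighbour (mrank indep E) J k"
  proof (cases "?S = {}")
    case True
    show ?thesis
      unfolding upper_neighbour_def True by (simp add: flat_ground)
  next
    case False
    have fin: "finite ?S"
      using \<open>finite J\<close> by simp
    have "Min ?S \<in> J"
      using Min_in[OF fin False] by blast
    then have flat_min: "flat E indep (H (Min ?S))" and rank_min: "mrank indep (H (Min ?S)) = Min ?S"
      using H unfolding chains_of_flats_def by auto
    have "E \<inter> \<Inter>(H ` ?S) = H (Min ?S)"
      using Inter_chain_of_flats[OF H _ fin False] flat_subset_ground[OF flat_min] by blast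
    moreover have "Min ?S \<le> mrank indep E"
      using mrank_mono[OF flat_subset_ground[OF flat_min]] rank_min by simp
    then have "upper_neighbour (mrank indep E) J k = Min ?S"
      unfolding upper_neighbour_def using Min_insert[OF fin False] by simp
    ultimately show ?thesis
      using flat_min rank_min by simp
  qed
  then show "flat E indep (E \<inter> \<Inter>(H ` ?S))"
    and "mrank indep (E \<inter> \<Inter>(H ` ?S)) = upper_neighbour (mrank indep E) J k"
    by auto
qed

lemma Union_chain_below_subset_Inter_above:
  assumes H: "H \<in> chains_of_flats E indep J"
  shows "\<Union>(H ` {j\<in>J. j < k}) \<subseteq> E \<inter> \<Inter>(H ` {j\<in>J. k < j})"
proof -
  have "H i \<subseteq> E" if "i \<in> J" for i
    using H that flat_subset_ground unfolding chains_of_flats_def by blast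
  moreover have "H i \<subseteq> H j" if "i \<in> J" "j \<in> J" "i < k" "k < j" for i j
    using chain_mono[OF H] that by simp
  ultimately show ?thesis
    by blast
qed

lemma insertion_flats_eq_flats_between:
  "insertion_flats J k H = {F. flat E indep F \<and> mrank indep F = k
     \<and> \<Union>(H ` {j\<in>J. j < k}) \<subseteq> F \<and> F \<subseteq> E \<inter> \<Inter>(H ` {j\<in>J. k < j})}"
  unfolding insertion_flats_def using flat_subset_ground by blast

lemma insertion_factor_le_card_insertion_flats:
  assumes H: "H \<in> chains_of_flats E indep J" and "finite J" "k \<le> mrank indep E"
  shows "insertion_factor (mrank indep E) J k \<le> card (insertion_flats J k H)"
  using binomial_le_card_flats_between[OF Union_chain_below_subset_Inter_above[OF H]
      Inter_chain_above(1)[OF H \<open>finite J\<close>], of k]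
    lower_neighbour_le le_upper_neighbour[OF \<open>finite J\<close> \<open>k \<le> mrank indep E\<close>]
  unfolding insertion_factor_def insertion_flats_eq_flats_between
    mrank_Union_chain_below[OF H \<open>finite J\<close>] Inter_chain_above(2)[OF H \<open>finite J\<close>]
  by blast

end

locale free_matroid =
  fixes S :: "'a set"
  assumes finite_S: "finite S"
begin

sublocale finite_matroid S "\<lambda>I. I \<subseteq> S"
  by unfold_locales (rule matroid_subsets[OF finite_S])

lemma mrank_eq_card:
  assumes "X \<subseteq> S"
  shows "mrank (\<lambda>I. I \<subseteq> S) X = card X"
proof (rule antisym)
  obtain I where "I \<subseteq> X" "I \<subseteq> S" "card I = mrank (\<lambda>I. I \<subseteq> S) X"
    by (rule obtain_basis)
  then show "mrank (\<lambda>I. I \<subseteq> S) X \<le> card X"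
    using card_mono finite_subset[OF assms finite_S] by metis
  show "card X \<le> mrank (\<lambda>I. I \<subseteq> S) X"
    using card_le_mrank[of X X] assms by simp
qed

lemma flat_iff_subset: "flat S (\<lambda>I. I \<subseteq> S) X \<longleftrightarrow> X \<subseteq> S"
proof
  assume "X \<subseteq> S"
  moreover have "card X < card (insert x X)" if "x \<in> S - X" for x
    using that finite_subset[OF \<open>X \<subseteq> S\<close> finite_S] by simp
  ultimately show "flat S (\<lambda>I. I \<subseteq> S) X"
    unfolding flat_def using mrank_eq_card by simp
qed (rule flat_subset_ground)

lemma card_insertion_flats_le_insertion_factor:
  assumes H: "H \<in> chains_of_flats S (\<lambda>I. I \<subseteq> S) J" and "finite J"
  shows "card (insertion_flats J k H) \<le> insertion_factor (card S) J k"
proof -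
  let ?L = "\<Union>(H ` {j\<in>J. j < k})" and ?U = "S \<inter> \<Inter>(H ` {j\<in>J. k < j})"
  have LU: "?L \<subseteq> ?U"
    by (rule Union_chain_below_subset_Inter_above[OF H])
  have "card ?L = lower_neighbour J k"
    using mrank_Union_chain_below[OF H \<open>finite J\<close>] mrank_eq_card[of ?L] LU by auto
  moreover have "card ?U = upper_neighbour (card S) J k"
    using Inter_chain_above(2)[OF H \<open>finite J\<close>] mrank_eq_card[of S] mrank_eq_card[of ?U] by simp
  moreover have "insertion_flats J k H \<subseteq> {F. ?L \<subseteq> F \<and> F \<subseteq> ?U \<and> card F = k}"
    unfolding insertion_flats_eq_flats_between using mrank_eq_card by auto
  then have "card (insertion_flats J k H) \<le> card {F. ?L \<subseteq> F \<and> F \<subseteq> ?U \<and> card F = k}"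
    by (rule card_mono[rotated]) (simp add: finite_S)
  ultimately show ?thesis
    using card_sets_between_le_binomial[OF LU, of k] finite_S unfolding insertion_factor_def by simp
qed

end

lemma N_flag_insert_ge:
  assumes "matroid E indep" "finite J" "k \<notin> J" "k \<le> mrank indep E"
  shows "insertion_factor (mrank indep E) J k * N_flag E indep J \<le> N_flag E indep (insert k J)"
proof -
  interpret finite_matroid E indep
    by (rule finite_matroid.intro) (rule assms(1))
  have "(\<Sum>H\<in>chains_of_flats E indep J. insertion_factor (mrank indep E) J k)
      \<le> (\<Sum>H\<in>chains_of_flats E indep J. card (insertion_flats J k H))"
    using insertion_factor_le_card_insertion_flats assms(2,4) by (intro sum_mono) blast
  then show ?thesis
    unfolding N_flag_def card_chains_of_flats_insert[OF assms(2,3)] by (simp add: mult.commute)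
qed

lemma U_flag_insert_le:
  assumes "finite J" "k \<notin> J"
  shows "U_flag d (insert k J) \<le> insertion_factor (d + 1) J k * U_flag d J"
proof -
  interpret free_matroid "{0..d}"
    by unfold_locales simp
  let ?C = "chains_of_flats {0..d} (\<lambda>I. I \<subseteq> {0..d}) J"
  have "(\<Sum>H\<in>?C. card (insertion_flats J k H)) \<le> (\<Sum>H\<in>?C. insertion_factor (card {0..d}) J k)"
    using card_insertion_flats_le_insertion_factor assms(1) by (intro sum_mono) blast
  then show ?thesis
    unfolding U_flag_def N_flag_def card_chains_of_flats_insert[OF assms] by (simp add: mult.commute)
qed

lemma U_flag_pos:
  assumes "J \<subseteq> {..d + 1}"
  shows "0 < U_flag d J"
proof -
  interpret free_matroid "{0..d}"
    by unfold_locales simp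
  let ?G = "\<lambda>j. if j \<in> J then {0..<j} else {}"
  have "{0..<j} \<subseteq> {0..d}" if "j \<in> J" for j
    using that assms by auto
  then have "?G \<in> chains_of_flats {0..d} (\<lambda>I. I \<subseteq> {0..d}) J"
    unfolding chains_of_flats_def using flat_iff_subset mrank_eq_card by auto
  moreover have "finite (chains_of_flats {0..d} (\<lambda>I. I \<subseteq> {0..d}) J)"
    using finite_chains_of_flats finite_subset[OF assms] by blast
  ultimately show ?thesis
    unfolding U_flag_def N_flag_def by (auto simp: card_gt_0_iff)
qed

lemma N_flag_div_U_flag_le_insert:
  assumes M: "matroid E indep" and rank_E: "mrank indep E = d + 1"
    and J: "J \<subseteq> {..d + 1}" and k: "k \<le> d + 1" "k \<notin> J"
  shows "real (N_flag E indep J) / real (U_flag d J)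
    \<le> real (N_flag E indep (insert k J)) / real (U_flag d (insert k J))"
proof -
  let ?c = "insertion_factor (d + 1) J k"
  have fin_J: "finite J"
    using J finite_subset by blast
  have "N_flag E indep J * U_flag d (insert k J) \<le> N_flag E indep J * (?c * U_flag d J)"
    using U_flag_insert_le[OF fin_J k(2)] by simp
  also have "\<dots> = (?c * N_flag E indep J) * U_flag d J"
    by simp
  also have "\<dots> \<le> N_flag E indep (insert k J) * U_flag d J"
    using N_flag_insert_ge[OF M fin_J k(2)] rank_E k(1) by simp
  finally have "real (N_flag E indep J) * real (U_flag d (insert k J))
      \<le> real (N_flag E indep (insert k J)) * real (U_flag d J)"
    by (metis of_nat_le_iff of_nat_mult)
  moreover have "0 < U_flag d J" "0 < U_flag d (insert k J)"
    using U_flag_pos J k(1) by auto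
  ultimately show ?thesis
    by (simp add: divide_simps)
qed

theorem lemma3p29:
  fixes E :: "'a set" and indep :: "'a set \<Rightarrow> bool" and d :: nat and J J' :: "nat set"
  assumes "matroid E indep" and "loopless E indep" and "mrank indep E = d + 1"
    and "J \<subseteq> J'" and "J' \<subseteq> {1..d}"
  shows "real (N_flag E indep J) / real (U_flag d J)
           \<le> real (N_flag E indep J') / real (U_flag d J')"
proof -
  let ?ratio = "\<lambda>J. real (N_flag E indep J) / real (U_flag d J)"
  have "finite (J' - J)" "J' - J \<subseteq> {1..d} - J"
    using assms(5) finite_subset by auto
  then have "?ratio J \<le> ?ratio (J \<union> (J' - J))"
  proof (induction rule: finite_subset_induct')
    case (insert k D)
    have "J \<union> D \<subseteq> {..d + 1}" "k \<le> d + 1" "k \<notin> J \<union> D"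
      using insert.hyps assms(4,5) by auto
    then have "?ratio (J \<union> D) \<le> ?ratio (insert k (J \<union> D))"
      by (rule N_flag_div_U_flag_le_insert[OF assms(1,3)])
    with insert.IH show ?case
      by simp
  qed simp
  moreover have "J \<union> (J' - J) = J'"
    using assms(4) by blast
  ultimately show ?thesis
    by simp
qed

end
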